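(* Let $G$ be a Frobenius group whose Frobenius kernel $N$ is elementary abelian of order $p^2$ ($p$ prime) and whose Frobenius complement $C$ has prime order $q$. Then: (1) if $q\nmid p-1$, then $G\in\mathcal{D}_{\frac{p+1}{q}+1}$; (2) if $q\mid p-1$, then either $G\in\mathcal{D}_{p+2}$ (and this always happens when $q=2$) or $G\in\mathcal{D}_{\frac{p-1}{q}+3}$.
   Context: $\mathcal{D}(G)$ denotes the number of conjugacy classes of nontrivial subgroups $H$ of the finite group $G$ with $N_G(H)\neq H$; $\mathcal{D}_n$ is the family of finite groups $G$ with $\mathcal{D}(G)=n$. *)

theory Defs
  imports "HOL-Algebra.Algebra"
begin

definition conj_set :: "('a, 'b) monoid_scheme \<Rightarrow> 'a \<Rightarrow> 'a set \<Rightarrow> 'a set" where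
  "conj_set G g H = g <#\<^bsub>G\<^esub> H #>\<^bsub>G\<^esub> inv\<^bsub>G\<^esub> g"

definition conj_class :: "('a, 'b) monoid_scheme \<Rightarrow> 'a set \<Rightarrow> 'a set set" where
  "conj_class G H = {conj_set G g H | g. g \<in> carrier G}"

definition D_subgroups :: "('a, 'b) monoid_scheme \<Rightarrow> 'a set set" where
  "D_subgroups G = {H. subgroup H G \<and> H \<noteq> {\<one>\<^bsub>G\<^esub>} \<and> normalizer G H \<noteq> H}"

definition D_count :: "('a, 'b) monoid_scheme \<Rightarrow> nat" where
  "D_count G = card (conj_class G ` D_subgroups G)"

definition frobenius_complement :: "('a, 'b) monoid_scheme \<Rightarrow> 'a set \<Rightarrow> bool" where
  "frobenius_complement G C \<longleftrightarrow> subgroup C G \<and> C \<noteq> {\<one>\<^bsub>G\<^esub>} \<and> C \<noteq> carrier G \<and>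
     (\<forall>g \<in> carrier G - C. C \<inter> conj_set G g C = {\<one>\<^bsub>G\<^esub>})"

definition frobenius_kernel :: "('a, 'b) monoid_scheme \<Rightarrow> 'a set \<Rightarrow> 'a set" where
  "frobenius_kernel G C = (carrier G - (\<Union>g \<in> carrier G. conj_set G g C)) \<union> {\<one>\<^bsub>G\<^esub>}"

definition elementary_abelian :: "('a, 'b) monoid_scheme \<Rightarrow> 'a set \<Rightarrow> nat \<Rightarrow> bool" where
  "elementary_abelian G N p \<longleftrightarrow> subgroup N G \<and>
     (\<forall>x \<in> N. \<forall>y \<in> N. x \<otimes>\<^bsub>G\<^esub> y = y \<otimes>\<^bsub>G\<^esub> x) \<and>
     (\<forall>x \<in> N. x [^]\<^bsub>G\<^esub> p = \<one>\<^bsub>G\<^esub>)"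

end

theory Submission
  imports Defs
begin

text \<open>
  Since \<open>G - N\<close> is covered by the \<open>|G| / q\<close> conjugates of \<open>C\<close> and \<open>N \<inter> C = 1\<close>, counting
  gives \<open>G = N C\<close> with \<open>|G| = p\<^sup>2 q\<close>. A subgroup \<open>H \<not>\<subseteq> N\<close> contains a conjugate of \<open>C\<close>, and
  then \<open>H\<close> is self-normalizing: for a nontrivial \<open>c\<close> in that conjugate, the commutator map
  \<open>m \<mapsto> m\<inverse> c m c\<inverse>\<close> is injective on \<open>N\<close>, as \<open>c\<close> acts without fixed points, and maps \<open>H \<inter> N\<close>
  onto itself, so every element of \<open>N\<close> normalizing \<open>H\<close> lies in \<open>H\<close>. Hence the subgroups
  counted by \<open>D(G)\<close> are \<open>N\<close> and its \<open>p + 1\<close> subgroups of order \<open>p\<close> ("lines"), and the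
  conjugacy classes of lines are their \<open>C\<close>-orbits, of length \<open>1\<close> or \<open>q\<close>. With \<open>f\<close> invariant
  lines and \<open>b\<close> orbits of length \<open>q\<close>, \<open>D(G) = f + b + 1\<close> and \<open>p + 1 = f + q b\<close>. An invariant
  line gives \<open>q | p - 1\<close>; three invariant lines force \<open>C\<close> to act on \<open>N\<close> by scalars, so that
  every line is invariant, and the same happens for \<open>q = 2\<close>, where \<open>C\<close> acts by inversion.
\<close>

section \<open>Conjugation of subsets\<close>

context group begin

lemma inv_mult_cancel_left [simp]:
  "x \<in> carrier G \<Longrightarrow> y \<in> carrier G \<Longrightarrow> inv x \<otimes> (x \<otimes> y) = y"
  by (simp add: m_assoc[symmetric])

lemma mult_inv_cancel_left [simp]:
  "x \<in> carrier G \<Longrightarrow> y \<in> carrier G \<Longrightarrow> x \<otimes> (inv x \<otimes> y) = y"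
  by (simp add: m_assoc[symmetric])

lemma conj_eq_one_iff [simp]:
  assumes "g \<in> carrier G" "h \<in> carrier G"
  shows "g \<otimes> h \<otimes> inv g = \<one> \<longleftrightarrow> h = \<one>"
proof
  assume "g \<otimes> h \<otimes> inv g = \<one>"
  moreover have "h = inv g \<otimes> (g \<otimes> h \<otimes> inv g) \<otimes> g"
    using assms by (simp add: m_assoc)
  ultimately show "h = \<one>"
    using assms by simp
qed (use assms in simp)

lemma conj_set_eq_image:
  assumes "g \<in> carrier G" "H \<subseteq> carrier G"
  shows "conj_set G g H = (\<lambda>h. g \<otimes> h \<otimes> inv g) ` H"
  unfolding conj_set_def l_coset_def r_coset_def by auto

lemma conj_set_closed:
  "g \<in> carrier G \<Longrightarrow> H \<subseteq> carrier G \<Longrightarrow> conj_set G g H \<subseteq> carrier G"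
  by (auto simp: conj_set_eq_image)

lemma mem_conj_set_iff:
  assumes "g \<in> carrier G" "H \<subseteq> carrier G" "x \<in> carrier G"
  shows "x \<in> conj_set G g H \<longleftrightarrow> inv g \<otimes> x \<otimes> g \<in> H"
proof
  assume "x \<in> conj_set G g H"
  then obtain h where "h \<in> H" "x = g \<otimes> h \<otimes> inv g"
    using assms by (auto simp: conj_set_eq_image)
  then show "inv g \<otimes> x \<otimes> g \<in> H"
    using assms by (auto simp: m_assoc subsetD)
next
  assume "inv g \<otimes> x \<otimes> g \<in> H"
  moreover have "x = g \<otimes> (inv g \<otimes> x \<otimes> g) \<otimes> inv g"
    using assms by (simp add: m_assoc)
  ultimately show "x \<in> conj_set G g H"
    using assms by (auto simp: conj_set_eq_image)
qed

lemma conj_set_mult: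
  assumes g: "g \<in> carrier G" and h: "h \<in> carrier G" and H: "H \<subseteq> carrier G"
  shows "conj_set G g (conj_set G h H) = conj_set G (g \<otimes> h) H"
proof -
  have "g \<otimes> (h \<otimes> x \<otimes> inv h) \<otimes> inv g = g \<otimes> h \<otimes> x \<otimes> inv (g \<otimes> h)" if "x \<in> H" for x
    using that g h H by (auto simp: inv_mult_group m_assoc)
  then show ?thesis
    using g h H conj_set_closed[OF h H] by (simp add: conj_set_eq_image image_image)
qed

lemma conj_set_one: "H \<subseteq> carrier G \<Longrightarrow> conj_set G \<one> H = H"
  by (auto simp: conj_set_eq_image subsetD)

lemma card_conj_set:
  assumes "g \<in> carrier G" "H \<subseteq> carrier G"
  shows "card (conj_set G g H) = card H"
proof -
  have "inj_on (\<lambda>h. g \<otimes> h \<otimes> inv g) H"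
    using assms by (intro inj_onI) (auto simp: subsetD)
  then show ?thesis
    using assms by (simp add: conj_set_eq_image card_image)
qed

lemma subgroup_conj_set:
  assumes g: "g \<in> carrier G" and H: "subgroup H G"
  shows "subgroup (conj_set G g H) G"
proof -
  interpret H: subgroup H G by (rule H)
  have img: "conj_set G g H = (\<lambda>h. g \<otimes> h \<otimes> inv g) ` H"
    by (rule conj_set_eq_image[OF g H.subset])
  show ?thesis
  proof (rule subgroupI)
    show "conj_set G g H \<subseteq> carrier G"
      using g conj_set_closed H.subset by blast
    show "conj_set G g H \<noteq> {}"
      using subgroup_nonempty H img by auto
  next
    fix a assume "a \<in> conj_set G g H"
    then obtain h where h: "h \<in> H" "a = g \<otimes> h \<otimes> inv g"
      using img by auto
    then have "inv a = g \<otimes> inv h \<otimes> inv g"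
      using g by (simp add: inv_mult_group m_assoc)
    then show "inv a \<in> conj_set G g H"
      using h img by auto
  next
    fix a b assume "a \<in> conj_set G g H" "b \<in> conj_set G g H"
    then obtain h k where "h \<in> H" "a = g \<otimes> h \<otimes> inv g" "k \<in> H" "b = g \<otimes> k \<otimes> inv g"
      using img by auto
    moreover from this have "a \<otimes> b = g \<otimes> (h \<otimes> k) \<otimes> inv g"
      using g by (simp add: m_assoc)
    ultimately show "a \<otimes> b \<in> conj_set G g H"
      using img by auto
  qed
qed

lemma conj_set_self:
  assumes H: "subgroup H G" and g: "g \<in> H"
  shows "conj_set G g H = H"
proof -
  interpret H: subgroup H G by (rule H)
  have "x \<in> conj_set G g H \<longleftrightarrow> x \<in> H" if x: "x \<in> carrier G" for x
  proof -
    have "inv g \<otimes> x \<otimes> g \<in> H \<longleftrightarrow> x \<in> H"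
    proof
      assume "inv g \<otimes> x \<otimes> g \<in> H"
      then have "g \<otimes> (inv g \<otimes> x \<otimes> g) \<otimes> inv g \<in> H"
        using g by blast
      then show "x \<in> H"
        using g x by (simp add: m_assoc)
    qed (use g in blast)
    then show ?thesis
      using g x H.subset by (simp add: mem_conj_set_iff subsetD)
  qed
  then show ?thesis
    using g conj_set_closed H.subset by blast
qed

lemma conj_set_normal:
  assumes N: "N \<lhd> G" and g: "g \<in> carrier G"
  shows "conj_set G g N = N"
proof -
  interpret N: normal N G by (rule N)
  have "x \<in> conj_set G g N \<longleftrightarrow> x \<in> N" if x: "x \<in> carrier G" for x
  proof -
    have "inv g \<otimes> x \<otimes> g \<in> N \<longleftrightarrow> x \<in> N"
    proof
      assume "inv g \<otimes> x \<otimes> g \<in> N"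
      then have "g \<otimes> (inv g \<otimes> x \<otimes> g) \<otimes> inv g \<in> N"
        using g N.inv_op_closed2 by blast
      then show "x \<in> N"
        using g x by (simp add: m_assoc)
    qed (use g N.inv_op_closed1 in blast)
    then show ?thesis
      using g x N.subset by (simp add: mem_conj_set_iff)
  qed
  then show ?thesis
    using g conj_set_closed N.subset by blast
qed

lemma conj_set_centralized:
  assumes "g \<in> carrier G" "M \<subseteq> carrier G" "\<And>h. h \<in> M \<Longrightarrow> g \<otimes> h = h \<otimes> g"
  shows "conj_set G g M = M"
proof -
  have "g \<otimes> h \<otimes> inv g = h" if "h \<in> M" for h
    using that assms by (simp add: m_assoc subsetD)
  then show ?thesis
    using assms by (simp add: conj_set_eq_image)
qed

lemma normalizer_conj_set:
  "H \<subseteq> carrier G \<Longrightarrow> normalizer G H = {g \<in> carrier G. conj_set G g H = H}"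
  unfolding normalizer_def stabilizer_def conj_set_def by auto

lemma conj_mult:
  assumes "g \<in> carrier G" "x \<in> carrier G" "y \<in> carrier G"
  shows "g \<otimes> (x \<otimes> y) \<otimes> inv g = (g \<otimes> x \<otimes> inv g) \<otimes> (g \<otimes> y \<otimes> inv g)"
  using assms by (simp add: m_assoc)

lemma conj_pow:
  assumes "g \<in> carrier G" "x \<in> carrier G"
  shows "g \<otimes> x [^] (k::nat) \<otimes> inv g = (g \<otimes> x \<otimes> inv g) [^] k"
proof (induction k)
  case (Suc k)
  then show ?case
    using assms conj_mult[of g "x [^] k" x] by simp
qed (use assms in simp)

end

definition conj_action :: "('a, 'b) monoid_scheme \<Rightarrow> 'a \<Rightarrow> 'a set \<Rightarrow> 'a set" where
  "conj_action G g = (\<lambda>H \<in> {H. H \<subseteq> carrier G}. conj_set G g H)"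

lemma (in group) group_action_conj_action:
  "group_action G {H. H \<subseteq> carrier G} (conj_action G)"
proof -
  have "conj_action G = (\<lambda>g. \<lambda>H \<in> {H. H \<subseteq> carrier G}. g <# H #> inv g)"
    unfolding conj_action_def conj_set_def ..
  then show ?thesis
    using action_by_conjugation_on_power_set by simp
qed

section \<open>Subgroups of prime order and fixed-point-free elements\<close>

lemma prime_dvd_cases: "Factorial_Ring.prime (r::nat) \<Longrightarrow> d dvd r \<Longrightarrow> d = 1 \<or> d = r"
  using prime_nat_iff by auto

lemma card_ge_3_obtain:
  assumes "3 \<le> card A"
  obtains a b c where "a \<in> A" "b \<in> A" "c \<in> A" "a \<noteq> b" "a \<noteq> c" "b \<noteq> c"
  using assms by (auto simp: numeral_3_eq_3 card_le_Suc_iff)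

context group begin

lemma card_subgroup_dvd:
  assumes "subgroup A G" "subgroup B G" "A \<subseteq> B"
  shows "card A dvd card B"
proof -
  interpret B: group "G\<lparr>carrier := B\<rparr>"
    using assms subgroup_imp_group by blast
  have "subgroup A (G\<lparr>carrier := B\<rparr>)"
    using subgroup_incl assms by blast
  from B.lagrange[OF this] have "card (rcosets\<^bsub>G\<lparr>carrier := B\<rparr>\<^esub> A) * card A = card B"
    by (simp add: order_def)
  then show ?thesis
    by (metis dvd_triv_right)
qed

lemma subgroup_of_prime_card_subset:
  assumes A: "subgroup A G" and B: "subgroup B G" and p: "Factorial_Ring.prime (card B)"
    and x: "x \<in> A" "x \<in> B" "x \<noteq> \<one>"
  shows "B \<subseteq> A"
proof -
  have AB: "subgroup (A \<inter> B) G"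
    using A B by (rule subgroups_Inter_pair)
  have "finite B"
    using p card.infinite not_prime_0 by metis
  have "{\<one>, x} \<subseteq> A \<inter> B"
    using x A B subgroup.one_closed by blast
  then have "2 \<le> card (A \<inter> B)"
    using x(3) card_mono[of "A \<inter> B" "{\<one>, x}"] \<open>finite B\<close> by auto
  moreover have "card (A \<inter> B) dvd card B"
    using card_subgroup_dvd[OF AB B] by blast
  ultimately have "card (A \<inter> B) = card B"
    using prime_dvd_cases[OF p] by force
  then show ?thesis
    using card_subset_eq[OF \<open>finite B\<close>, of "A \<inter> B"] by blast
qed

lemma inj_on_mult_disjoint_subgroups:
  assumes A: "subgroup A G" and B: "subgroup B G" and AB: "A \<inter> B \<subseteq> {\<one>}"
  shows "inj_on (\<lambda>(a, b). a \<otimes> b) (A \<times> B)"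
proof (rule inj_onI, clarify)
  fix a b a' b' assume ab: "a \<in> A" "b \<in> B" "a' \<in> A" "b' \<in> B" and eq: "a \<otimes> b = a' \<otimes> b'"
  have car: "a \<in> carrier G" "b \<in> carrier G" "a' \<in> carrier G" "b' \<in> carrier G"
    using ab A B subgroup.mem_carrier by metis+
  have "inv a' \<otimes> a = inv a' \<otimes> (a \<otimes> b) \<otimes> inv b"
    using car by (simp add: m_assoc)
  also have "\<dots> = b' \<otimes> inv b"
    using car eq by (simp add: m_assoc[symmetric])
  finally have "inv a' \<otimes> a = b' \<otimes> inv b" .
  moreover have "inv a' \<otimes> a \<in> A" "b' \<otimes> inv b \<in> B"
    using ab A B by (auto intro: subgroup.m_closed subgroup.m_inv_closed)
  ultimately have "inv a' \<otimes> a = \<one>"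
    using AB by auto
  moreover have "a = a' \<otimes> (inv a' \<otimes> a)"
    using car by (simp add: m_assoc[symmetric])
  ultimately have "a = a'"
    using car by simp
  then show "a = a' \<and> b = b'"
    using eq car by simp
qed

lemma card_mult_disjoint_subgroups:
  assumes "subgroup A G" "subgroup B G" "A \<inter> B \<subseteq> {\<one>}"
  shows "card ((\<lambda>(a, b). a \<otimes> b) ` (A \<times> B)) = card A * card B"
  using card_image[OF inj_on_mult_disjoint_subgroups[OF assms]] by (simp add: card_cartesian_product)

end

lemma (in group) inj_on_commutator_of_fixed_point_free:
  assumes N: "subgroup N G" and c: "c \<in> carrier G"
    and fpf: "\<And>m. m \<in> N \<Longrightarrow> m \<otimes> c = c \<otimes> m \<Longrightarrow> m = \<one>"
  shows "inj_on (\<lambda>m. inv m \<otimes> c \<otimes> m \<otimes> inv c) N"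
proof (rule inj_onI)
  interpret N: subgroup N G by (rule N)
  fix m m' assume m: "m \<in> N" "m' \<in> N" and eq: "inv m \<otimes> c \<otimes> m \<otimes> inv c = inv m' \<otimes> c \<otimes> m' \<otimes> inv c"
  have mc: "m \<in> carrier G" "m' \<in> carrier G"
    using m N.subset by blast+
  have "inv m \<otimes> c \<otimes> m = inv m' \<otimes> c \<otimes> m'"
    using eq mc c by (simp add: inv_solve_right')
  then have "m' \<otimes> (inv m \<otimes> c \<otimes> m) \<otimes> inv m = m' \<otimes> (inv m' \<otimes> c \<otimes> m') \<otimes> inv m"
    by simp
  then have "(m' \<otimes> inv m) \<otimes> c = c \<otimes> (m' \<otimes> inv m)"
    using mc c by (simp add: m_assoc)
  then have "m' \<otimes> inv m = \<one>"
    using fpf m by blast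
  then show "m = m'"
    using mc by (metis inv_closed inv_equality inv_inv)
qed

text \<open>
  The commutator map \<open>\<psi>\<close> is injective on \<open>N\<close> and maps the finite set \<open>H \<inter> N\<close> into itself,
  hence onto itself; as \<open>\<psi> n \<in> H \<inter> N\<close>, the element \<open>n\<close> itself lies in \<open>H \<inter> N\<close>.
\<close>
lemma (in group) normalizer_mem_of_fixed_point_free:
  assumes H: "subgroup H G" and N: "N \<lhd> G" "finite N"
    and c: "c \<in> H" and fpf: "\<And>m. m \<in> N \<Longrightarrow> m \<otimes> c = c \<otimes> m \<Longrightarrow> m = \<one>"
    and n: "n \<in> N" "n \<in> normalizer G H"
  shows "n \<in> H"
proof -
  interpret H: subgroup H G by (rule H)
  interpret N: normal N G by (rule N(1))
  have cc: "c \<in> carrier G"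
    using c H.subset by blast
  define \<psi> where "\<psi> m = inv m \<otimes> c \<otimes> m \<otimes> inv c" for m
  have \<psi>_inj: "inj_on \<psi> N"
    unfolding \<psi>_def using inj_on_commutator_of_fixed_point_free[OF N.subgroup_axioms cc fpf] .
  have \<psi>_N: "\<psi> m \<in> N" if "m \<in> N" for m
  proof -
    have "\<psi> m = inv m \<otimes> (c \<otimes> m \<otimes> inv c)"
      using that cc unfolding \<psi>_def by (simp add: m_assoc)
    then show ?thesis
      using that cc N.inv_op_closed2 by auto
  qed
  have \<psi>_H: "\<psi> m \<in> H" if "m \<in> carrier G" "inv m \<otimes> c \<otimes> m \<in> H" for m
    using that c unfolding \<psi>_def by blast
  define K where "K = H \<inter> N"
  have "finite K"
    using N(2) unfolding K_def by blast
  have "\<psi> ` K \<subseteq> K"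
    using \<psi>_N \<psi>_H c unfolding K_def by auto
  moreover have "card (\<psi> ` K) = card K"
    using card_image inj_on_subset[OF \<psi>_inj] unfolding K_def by blast
  ultimately have \<psi>K: "\<psi> ` K = K"
    using card_subset_eq[OF \<open>finite K\<close>] by blast
  have "c \<in> conj_set G n H"
    using n(2) c H.subset by (simp add: normalizer_conj_set)
  then have "inv n \<otimes> c \<otimes> n \<in> H"
    using n(1) cc N.subset H.subset by (simp add: mem_conj_set_iff subsetD)
  then have "\<psi> n \<in> K"
    using \<psi>_N[OF n(1)] \<psi>_H n(1) N.subset unfolding K_def by blast
  then obtain k where "k \<in> K" "\<psi> k = \<psi> n"
    using \<psi>K by (metis imageE)
  then have "k = n"
    using \<psi>_inj n(1) unfolding K_def inj_on_def by blast
  then show ?thesis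
    using \<open>k \<in> K\<close> unfolding K_def by blast
qed

section \<open>Actions of groups of prime order\<close>

definition fixed_points :: "('a, 'c) monoid_scheme \<Rightarrow> ('a \<Rightarrow> 'b \<Rightarrow> 'b) \<Rightarrow> 'b set \<Rightarrow> 'b set" where
  "fixed_points K \<phi> S = {x \<in> S. \<forall>g \<in> carrier K. \<phi> g x = x}"

context group_action begin

lemma acting_group: "group G"
  using group_hom group_hom.axioms(1) by blast

lemma orbit_of_fixed_point:
  assumes "x \<in> fixed_points G \<phi> E"
  shows "orbit G \<phi> x = {x}"
proof -
  have "\<one> \<in> carrier G"
    using monoid.one_closed[OF group.is_monoid[OF acting_group]] .
  then show ?thesis
    using assms unfolding fixed_points_def orbit_def by force
qed

lemma finite_orbit: "finite (carrier G) \<Longrightarrow> finite (orbit G \<phi> x)"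
proof -
  have "orbit G \<phi> x = (\<lambda>g. \<phi> g x) ` carrier G"
    unfolding orbit_def by blast
  then show "finite (carrier G) \<Longrightarrow> ?thesis"
    by simp
qed

lemma fixed_point_if_fixed_by_nontrivial:
  assumes prime: "Factorial_Ring.prime (order G)" and x: "x \<in> E"
    and g: "g \<in> carrier G" "g \<noteq> \<one>" "\<phi> g x = x"
  shows "x \<in> fixed_points G \<phi> E"
proof -
  have fin: "finite (carrier G)"
    using prime by (metis order_def card.infinite not_prime_0)
  have "{\<one>, g} \<subseteq> stabilizer G \<phi> x"
    using g x stabilizer_one_closed unfolding stabilizer_def by auto
  moreover have "card {\<one>, g} = 2"
    using g(2) by simp
  ultimately have "2 \<le> card (stabilizer G \<phi> x)"
    using card_mono[OF finite_subset[OF stabilizer_subset fin]] by metis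
  moreover have "card (stabilizer G \<phi> x) dvd order G"
    using orbit_stabilizer_theorem[OF x] by (metis dvd_triv_right)
  ultimately have "card (stabilizer G \<phi> x) = card (carrier G)"
    using prime_dvd_cases[OF prime] unfolding order_def by force
  then have "stabilizer G \<phi> x = carrier G"
    using card_subset_eq[OF fin stabilizer_subset] by blast
  then show ?thesis
    using x unfolding stabilizer_def fixed_points_def by blast
qed

lemma card_orbit_of_prime_order:
  assumes prime: "Factorial_Ring.prime (order G)" and x: "x \<in> E" "x \<notin> fixed_points G \<phi> E"
  shows "card (orbit G \<phi> x) = order G"
proof -
  have fin: "finite (carrier G)"
    using prime by (metis order_def card.infinite not_prime_0)
  obtain g where g: "g \<in> carrier G" "\<phi> g x \<noteq> x"
    using x unfolding fixed_points_def by blast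
  have "{x, \<phi> g x} \<subseteq> orbit G \<phi> x"
    using orbit_refl[OF x(1)] g(1) unfolding orbit_def by blast
  moreover have "card {x, \<phi> g x} = 2"
    using g(2) by simp
  ultimately have "2 \<le> card (orbit G \<phi> x)"
    using card_mono[OF finite_orbit[OF fin]] by metis
  moreover have "card (orbit G \<phi> x) dvd order G"
    using orbit_stabilizer_theorem[OF x(1)] by (metis dvd_triv_left)
  ultimately show ?thesis
    using prime_dvd_cases[OF prime] by force
qed

lemma card_eq_sum_card_orbits:
  assumes fin: "finite S" and S: "S \<subseteq> E"
    and inv: "\<And>g x. g \<in> carrier G \<Longrightarrow> x \<in> S \<Longrightarrow> \<phi> g x \<in> S"
  shows "card S = (\<Sum>orb \<in> orbit G \<phi> ` S. card orb)"
proof -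
  have orbit_sub: "orbit G \<phi> x \<subseteq> S" if "x \<in> S" for x
    using that inv unfolding orbit_def by blast
  have S_eq: "S = \<Union> (orbit G \<phi> ` S)"
    using orbit_sub orbit_refl S by blast
  have "pairwise disjnt (orbit G \<phi> ` S)"
  proof (rule pairwiseI)
    fix orb1 orb2 assume "orb1 \<in> orbit G \<phi> ` S" "orb2 \<in> orbit G \<phi> ` S" "orb1 \<noteq> orb2"
    moreover from this have "orb1 \<in> orbits G E \<phi>" "orb2 \<in> orbits G E \<phi>"
      using S unfolding orbits_def by blast+
    ultimately show "disjnt orb1 orb2"
      using disjoint_union unfolding disjnt_def by blast
  qed
  moreover have "finite orb" if "orb \<in> orbit G \<phi> ` S" for orb
    using that orbit_sub fin finite_subset by blast
  ultimately have "card (\<Union> (orbit G \<phi> ` S)) = (\<Sum>orb \<in> orbit G \<phi> ` S. card orb)"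
    by (rule card_Union_disjoint)
  then show ?thesis
    using S_eq by simp
qed

lemma not_fixed_point_image:
  assumes x: "x \<in> E" "x \<notin> fixed_points G \<phi> E" and g: "g \<in> carrier G"
  shows "\<phi> g x \<notin> fixed_points G \<phi> E"
proof
  interpret G: group G by (rule acting_group)
  assume fixed: "\<phi> g x \<in> fixed_points G \<phi> E"
  have "x = \<phi> \<one>\<^bsub>G\<^esub> x"
    using x(1) id_eq_one by (metis restrict_apply')
  also have "\<dots> = \<phi> (inv\<^bsub>G\<^esub> g) (\<phi> g x)"
    using composition_rule[OF x(1) G.inv_closed[OF g] g] g by simp
  also have "\<dots> = \<phi> g x"
    using fixed g unfolding fixed_points_def by blast
  finally show False
    using x(2) fixed by simp
qed

lemma card_orbits_split_fixed_points:
  assumes fin: "finite S" and S: "S \<subseteq> E"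
  shows "card (orbit G \<phi> ` S) = card (fixed_points G \<phi> S) + card (orbit G \<phi> ` (S - fixed_points G \<phi> S))"
proof -
  let ?F = "fixed_points G \<phi> S"
  have F_sub: "?F \<subseteq> S"
    unfolding fixed_points_def by blast
  have orbit_F: "orbit G \<phi> ` ?F = (\<lambda>x. {x}) ` ?F"
    using orbit_of_fixed_point S unfolding fixed_points_def by (intro image_cong) auto
  have "orbit G \<phi> y \<noteq> {x}" if x: "x \<in> ?F" and y: "y \<in> S - ?F" for x y
  proof
    assume "orbit G \<phi> y = {x}"
    moreover have "y \<in> orbit G \<phi> y"
      using orbit_refl y S by blast
    ultimately have "y = x"
      by simp
    then show False
      using x y by simp
  qed
  then have "orbit G \<phi> ` ?F \<inter> orbit G \<phi> ` (S - ?F) = {}"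
    unfolding orbit_F by blast
  moreover have "orbit G \<phi> ` S = orbit G \<phi> ` ?F \<union> orbit G \<phi> ` (S - ?F)"
    using F_sub by blast
  moreover have "card (orbit G \<phi> ` ?F) = card ?F"
    using orbit_F by (simp add: card_image)
  ultimately show ?thesis
    using fin finite_subset[OF F_sub fin] by (simp add: card_Un_disjoint)
qed

lemma card_invariant_set_of_prime_order:
  assumes prime: "Factorial_Ring.prime (order G)"
    and fin: "finite S" and S: "S \<subseteq> E"
    and inv: "\<And>g x. g \<in> carrier G \<Longrightarrow> x \<in> S \<Longrightarrow> \<phi> g x \<in> S"
  shows "card S = card (fixed_points G \<phi> S) + order G * card (orbit G \<phi> ` (S - fixed_points G \<phi> S))"
proof -
  let ?F = "fixed_points G \<phi> S"
  have F_sub: "?F \<subseteq> S"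
    unfolding fixed_points_def by blast
  have F_E: "x \<in> fixed_points G \<phi> E \<longleftrightarrow> x \<in> ?F" if "x \<in> S" for x
    using that S unfolding fixed_points_def by blast
  have "\<phi> g x \<in> S - ?F" if "g \<in> carrier G" "x \<in> S - ?F" for g x
    using that inv not_fixed_point_image[of x g] S F_E by blast
  then have "card (S - ?F) = (\<Sum>orb \<in> orbit G \<phi> ` (S - ?F). card orb)"
    using card_eq_sum_card_orbits[of "S - ?F"] fin S by blast
  also have "\<dots> = (\<Sum>orb \<in> orbit G \<phi> ` (S - ?F). order G)"
    using card_orbit_of_prime_order[OF prime] F_E S by (intro sum.cong) auto
  finally have "card (S - ?F) = order G * card (orbit G \<phi> ` (S - ?F))"
    by (simp add: mult.commute)
  then show ?thesis
    using card_Diff_subset[OF finite_subset[OF F_sub fin] F_sub] card_mono[OF fin F_sub] by linarith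
qed

end

section \<open>Elementary abelian groups of order \<open>p\<^sup>2\<close>\<close>

locale elementary_abelian_p2 = group G for G (structure) +
  fixes N :: "'a set" and p :: nat
  assumes elementary_abelian: "elementary_abelian G N p"
    and prime_p: "Factorial_Ring.prime p"
    and card_N: "card N = p ^ 2"
begin

lemma subgroup_N: "subgroup N G"
  and N_comm: "x \<in> N \<Longrightarrow> y \<in> N \<Longrightarrow> x \<otimes> y = y \<otimes> x"
  and N_pow_p: "x \<in> N \<Longrightarrow> x [^] p = \<one>"
  using elementary_abelian unfolding elementary_abelian_def by blast+

lemma N_subset: "N \<subseteq> carrier G"
  using subgroup_N subgroup.subset by blast

lemma finite_N: "finite N"
proof -
  have "card N \<noteq> 0"
    using card_N prime_gt_0_nat[OF prime_p] by simp
  then show ?thesis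
    by (metis card.infinite)
qed

lemma p_ge_2: "2 \<le> p"
  using prime_p prime_ge_2_nat by blast

text \<open>Viewing \<open>N\<close> as a plane over the field with \<open>p\<close> elements, these are its lines through 0.\<close>
definition lines :: "'a set set" where
  "lines = {L. subgroup L G \<and> L \<subseteq> N \<and> card L = p}"

lemma lines_D:
  assumes "L \<in> lines"
  shows "subgroup L G" "L \<subseteq> N" "card L = p" "finite L" "\<one> \<in> L"
  using assms finite_N finite_subset subgroup.one_closed unfolding lines_def by blast+

lemma line_nontrivial:
  assumes "L \<in> lines"
  obtains x where "x \<in> L" "x \<noteq> \<one>"
proof -
  have "\<not> L \<subseteq> {\<one>}"
    using lines_D[OF assms] p_ge_2 card_mono[of "{\<one>}" L] by fastforce
  then show ?thesis
    using that by blast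
qed

lemma ord_eq_p: "x \<in> N \<Longrightarrow> x \<noteq> \<one> \<Longrightarrow> ord x = p"
  using pow_eq_id[of x p] ord_eq_1[of x] N_pow_p N_subset prime_dvd_cases[OF prime_p] by blast

lemma inv_eq_pow_p_minus_1:
  assumes m: "m \<in> N"
  shows "inv m = m [^] (p - 1)"
proof -
  have mc: "m \<in> carrier G"
    using m N_subset by blast
  obtain k where "p = Suc k"
    using p_ge_2 by (cases p) auto
  then have "m [^] (p - 1) \<otimes> m = \<one>"
    using N_pow_p[OF m] by simp
  then show ?thesis
    using inv_equality[OF _ mc nat_pow_closed[OF mc]] by blast
qed

lemma generate_in_lines:
  assumes "x \<in> N" "x \<noteq> \<one>"
  shows "generate G {x} \<in> lines"
proof -
  have x: "x \<in> carrier G"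
    using assms N_subset by blast
  have "generate G {x} \<subseteq> N"
    using generate_subgroup_incl[OF _ subgroup_N] assms by blast
  moreover have "card (generate G {x}) = p"
    using generate_pow_card[OF x] ord_eq_p[OF assms] by simp
  ultimately show ?thesis
    using generate_is_subgroup[of "{x}"] x unfolding lines_def by blast
qed

lemma line_eq_powers:
  assumes L: "L \<in> lines" and x: "x \<in> L" "x \<noteq> \<one>"
  shows "L = {x [^] (k::nat) | k. True}"
proof -
  have xN: "x \<in> N" and xc: "x \<in> carrier G"
    using lines_D(2)[OF L] x N_subset by blast+
  have "generate G {x} \<subseteq> L"
    using generate_subgroup_incl[OF _ lines_D(1)[OF L]] x by blast
  moreover have "L \<subseteq> generate G {x}"
    using subgroup_of_prime_card_subset[OF generate_is_subgroup lines_D(1)[OF L]]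
      lines_D(3)[OF L] prime_p x xc generate.incl[of x "{x}" G] by blast
  moreover have "generate G {x} = {x [^] (k::nat) | k. True}"
    using generate_pow_nat[OF xc] ord_eq_p[OF xN x(2)] p_ge_2 by simp
  ultimately show ?thesis
    by blast
qed

lemma lines_disjoint:
  assumes L: "L \<in> lines" and M: "M \<in> lines" and LM: "L \<noteq> M"
  shows "L \<inter> M = {\<one>}"
proof -
  have "x = \<one>" if "x \<in> L" "x \<in> M" for x
  proof (rule ccontr)
    assume "x \<noteq> \<one>"
    then have "L = M"
      using line_eq_powers L M that by metis
    then show False
      using LM by blast
  qed
  then show ?thesis
    using lines_D(5) L M by blast
qed

lemma finite_lines: "finite lines"
proof -
  have "lines \<subseteq> Pow N"
    unfolding lines_def by blast
  then show ?thesis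
    using finite_N finite_subset by blast
qed

lemma card_lines: "card lines = p + 1"
proof -
  have "N - {\<one>} = (\<Union>L \<in> lines. L - {\<one>})"
    using generate_in_lines generate.incl[of _ "{_}" G] lines_D(2) by blast
  also have "card \<dots> = (\<Sum>L \<in> lines. card (L - {\<one>}))"
    using finite_lines lines_D(4) lines_disjoint by (intro card_UN_disjoint) auto
  also have "\<dots> = card lines * (p - 1)"
    using lines_D by simp
  finally have "card lines * (p - 1) = p ^ 2 - 1"
    using card_N finite_N subgroup.one_closed[OF subgroup_N] by simp
  also have "\<dots> = (p + 1) * (p - 1)"
    by (cases p) (simp_all add: power2_eq_square)
  finally have "card lines * (p - 1) = (p + 1) * (p - 1)" .
  moreover have "p - 1 \<noteq> 0"
    using p_ge_2 by simp
  ultimately show ?thesis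
    by (metis mult_right_cancel)
qed

lemma mult_lines_eq_N:
  assumes L: "L \<in> lines" and M: "M \<in> lines" and LM: "L \<noteq> M"
  shows "(\<lambda>(a, b). a \<otimes> b) ` (L \<times> M) = N"
proof (rule card_subset_eq[OF finite_N])
  show "(\<lambda>(a, b). a \<otimes> b) ` (L \<times> M) \<subseteq> N"
    using lines_D(2)[OF L] lines_D(2)[OF M] subgroup.m_closed[OF subgroup_N] by auto
  show "card ((\<lambda>(a, b). a \<otimes> b) ` (L \<times> M)) = card N"
    using card_mult_disjoint_subgroups[OF lines_D(1)[OF L] lines_D(1)[OF M]]
      lines_disjoint[OF assms] lines_D(3) L M card_N by (simp add: power2_eq_square)
qed

lemma mult_lines_unique:
  assumes L: "L \<in> lines" and M: "M \<in> lines" and LM: "L \<noteq> M"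
    and a: "a \<in> L" "a' \<in> L" and b: "b \<in> M" "b' \<in> M" and eq: "a \<otimes> b = a' \<otimes> b'"
  shows "a = a' \<and> b = b'"
  using inj_onD[OF inj_on_mult_disjoint_subgroups[OF lines_D(1)[OF L] lines_D(1)[OF M]], of "(a, b)" "(a', b')"]
    lines_disjoint[OF L M LM] a b eq by simp

lemma subgroup_of_N_cases:
  assumes K: "subgroup K G" "K \<subseteq> N"
  shows "K = {\<one>} \<or> K \<in> lines \<or> K = N"
proof -
  have "card K dvd p ^ 2"
    using card_subgroup_dvd[OF K(1) subgroup_N K(2)] card_N by simp
  then obtain i where "i \<le> 2" "card K = p ^ i"
    using divides_primepow_nat[OF prime_p] by blast
  then consider "card K = 1" | "card K = p" | "card K = card N"
    using card_N by (auto simp: le_Suc_eq numeral_2_eq_2)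
  then show ?thesis
  proof cases
    case 1
    then show ?thesis
      using subgroup.one_closed[OF K(1)] by (auto simp: card_1_singleton_iff)
  next
    case 2
    then show ?thesis
      using K unfolding lines_def by blast
  next
    case 3
    then show ?thesis
      using card_subset_eq[OF finite_N K(2)] by blast
  qed
qed

lemma line_pow_closed:
  assumes L: "L \<in> lines" and h: "h \<in> L"
  shows "h [^] (k::nat) \<in> L"
proof (cases "h = \<one>")
  case True
  then show ?thesis
    using lines_D(5)[OF L] by simp
next
  case False
  then show ?thesis
    using line_eq_powers[OF L h] by blast
qed

lemma conj_on_invariant_line:
  assumes L: "L \<in> lines" and c: "c \<in> carrier G" "conj_set G c L = L" and x: "x \<in> L"
  obtains a :: nat where "c \<otimes> x \<otimes> inv c = x [^] a"
proof (cases "x = \<one>")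
  case True
  then show ?thesis
    using that[of 0] c by simp
next
  case False
  have "L \<subseteq> carrier G"
    using lines_D(2)[OF L] N_subset by blast
  then have "c \<otimes> x \<otimes> inv c \<in> L"
    using c x by (metis conj_set_eq_image imageI)
  then show ?thesis
    using that line_eq_powers[OF L x False] by blast
qed

lemma conj_eq_power_if_eq_power_on_two_lines:
  fixes e :: nat
  assumes L: "L \<in> lines" and M: "M \<in> lines" and LM: "L \<noteq> M"
    and u: "u \<in> L" "u \<noteq> \<one>" and v: "v \<in> M" "v \<noteq> \<one>" and c: "c \<in> carrier G"
    and cu: "c \<otimes> u \<otimes> inv c = u [^] e" and cv: "c \<otimes> v \<otimes> inv c = v [^] e"
    and m: "m \<in> N"
  shows "c \<otimes> m \<otimes> inv c = m [^] e"
proof -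
  have uvc: "u \<in> carrier G" "v \<in> carrier G"
    using u v lines_D(2) L M N_subset by blast+
  have "m \<in> (\<lambda>(a, b). a \<otimes> b) ` (L \<times> M)"
    using m mult_lines_eq_N[OF L M LM] by simp
  then obtain a b where ab: "a \<in> L" "b \<in> M" "m = a \<otimes> b"
    by auto
  obtain i j :: nat where ij: "a = u [^] i" "b = v [^] j"
    using ab line_eq_powers[OF L u] line_eq_powers[OF M v] by blast
  have ab_N: "a \<in> N" "b \<in> N" and abc: "a \<in> carrier G" "b \<in> carrier G"
    using ab lines_D(2) L M N_subset by blast+
  have "c \<otimes> m \<otimes> inv c = (c \<otimes> u \<otimes> inv c) [^] i \<otimes> (c \<otimes> v \<otimes> inv c) [^] j"
    using ab ij c uvc conj_mult conj_pow by simp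
  also have "\<dots> = a [^] e \<otimes> b [^] e"
    using cu cv ij by (simp add: nat_pow_pow[OF uvc(1)] nat_pow_pow[OF uvc(2)] mult.commute)
  also have "\<dots> = m [^] e"
    using ab(3) pow_mult_distrib[OF N_comm[OF ab_N] abc] by simp
  finally show ?thesis .
qed

lemma conj_eq_power_if_three_invariant_lines:
  assumes c: "c \<in> carrier G"
    and L: "L1 \<in> lines" "L2 \<in> lines" "L3 \<in> lines"
    and distinct: "L1 \<noteq> L2" "L1 \<noteq> L3" "L2 \<noteq> L3"
    and invariant: "conj_set G c L1 = L1" "conj_set G c L2 = L2" "conj_set G c L3 = L3"
  obtains e :: nat where "\<And>m. m \<in> N \<Longrightarrow> c \<otimes> m \<otimes> inv c = m [^] e"
proof -
  obtain z where z: "z \<in> L3" "z \<noteq> \<one>"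
    using line_nontrivial[OF L(3)] by blast
  have "z \<in> (\<lambda>(a, b). a \<otimes> b) ` (L1 \<times> L2)"
    using z(1) lines_D(2)[OF L(3)] mult_lines_eq_N[OF L(1,2) distinct(1)] by blast
  then obtain u v where uv: "u \<in> L1" "v \<in> L2" "z = u \<otimes> v"
    by auto
  have uvN: "u \<in> N" "v \<in> N" and uvc: "u \<in> carrier G" "v \<in> carrier G"
    using uv lines_D(2) L N_subset by blast+
  have "u \<noteq> \<one>"
  proof
    assume "u = \<one>"
    then have "z \<in> L2 \<inter> L3"
      using z uv uvc by simp
    then show False
      using z(2) lines_disjoint[OF L(2,3) distinct(3)] by blast
  qed
  have "v \<noteq> \<one>"
  proof
    assume "v = \<one>"
    then have "z \<in> L1 \<inter> L3"
      using z uv uvc by simp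
    then show False
      using z(2) lines_disjoint[OF L(1,3) distinct(2)] by blast
  qed
  obtain a :: nat where a: "c \<otimes> u \<otimes> inv c = u [^] a"
    using conj_on_invariant_line[OF L(1) c invariant(1) uv(1)] .
  obtain b :: nat where b: "c \<otimes> v \<otimes> inv c = v [^] b"
    using conj_on_invariant_line[OF L(2) c invariant(2) uv(2)] .
  obtain e :: nat where e: "c \<otimes> z \<otimes> inv c = z [^] e"
    using conj_on_invariant_line[OF L(3) c invariant(3) z(1)] .
  have "u [^] a \<otimes> v [^] b = c \<otimes> z \<otimes> inv c"
    using uv c uvc a b conj_mult by simp
  also have "\<dots> = u [^] e \<otimes> v [^] e"
    using e uv pow_mult_distrib[OF N_comm[OF uvN] uvc] by simp
  finally have "u [^] a = u [^] e \<and> v [^] b = v [^] e"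
    using mult_lines_unique[OF L(1,2) distinct(1)] line_pow_closed L(1,2) uv by blast
  then show ?thesis
    using that conj_eq_power_if_eq_power_on_two_lines[OF L(1,2) distinct(1) uv(1) \<open>u \<noteq> \<one>\<close>
        uv(2) \<open>v \<noteq> \<one>\<close> c] a b by metis
qed

lemma conj_set_line_if_conj_eq_power:
  assumes c: "c \<in> carrier G" and power: "\<And>m. m \<in> N \<Longrightarrow> c \<otimes> m \<otimes> inv c = m [^] (e::nat)"
    and L: "L \<in> lines"
  shows "conj_set G c L = L"
proof -
  have Lc: "L \<subseteq> carrier G"
    using lines_D(2)[OF L] N_subset by blast
  have "conj_set G c L \<subseteq> L"
    using power lines_D(2)[OF L] line_pow_closed[OF L] by (auto simp: conj_set_eq_image[OF c Lc])
  moreover have "card (conj_set G c L) = card L"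
    using card_conj_set[OF c Lc] .
  ultimately show ?thesis
    using card_subset_eq[OF lines_D(4)[OF L]] by blast
qed

end

section \<open>Frobenius groups with kernel of order \<open>p\<^sup>2\<close> and complement of order \<open>q\<close>\<close>

locale frobenius_p2q = elementary_abelian_p2 G N p for G (structure) and N p +
  fixes C :: "'a set" and q :: nat
  assumes finite_carrier: "finite (carrier G)"
    and complement: "frobenius_complement G C"
    and kernel: "N = frobenius_kernel G C"
    and prime_q: "Factorial_Ring.prime q"
    and card_C: "card C = q"
begin

lemma subgroup_C: "subgroup C G"
  and C_not_trivial: "C \<noteq> {\<one>}"
  and frobenius_condition: "g \<in> carrier G \<Longrightarrow> g \<notin> C \<Longrightarrow> C \<inter> conj_set G g C = {\<one>}"
  using complement unfolding frobenius_complement_def by blast+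

lemma C_subset: "C \<subseteq> carrier G"
  using subgroup_C subgroup.subset by blast

lemma q_ge_2: "2 \<le> q"
  using prime_q prime_ge_2_nat by blast

lemma C_nontrivial_elem:
  obtains c where "c \<in> C" "c \<noteq> \<one>"
  using C_not_trivial subgroup.one_closed[OF subgroup_C] by blast

lemma conj_C_nontrivial_elem:
  assumes g: "g \<in> carrier G"
  obtains c where "c \<in> conj_set G g C" "c \<noteq> \<one>"
proof -
  have "\<not> conj_set G g C \<subseteq> {\<one>}"
    using card_conj_set[OF g C_subset] card_C q_ge_2 card_mono[of "{\<one>}" "conj_set G g C"] by fastforce
  then show ?thesis
    using that by blast
qed

lemma mem_N_iff:
  "x \<in> carrier G \<Longrightarrow> x \<in> N \<longleftrightarrow> x = \<one> \<or> (\<forall>g \<in> carrier G. x \<notin> conj_set G g C)"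
  unfolding kernel frobenius_kernel_def by blast

lemma N_inter_C: "N \<inter> C = {\<one>}"
proof -
  have "x = \<one>" if "x \<in> N" "x \<in> C" for x
  proof -
    have "x \<in> conj_set G \<one> C"
      using that conj_set_one[OF C_subset] by simp
    then show ?thesis
      using mem_N_iff[of x] that C_subset by blast
  qed
  then show ?thesis
    using subgroup.one_closed[OF subgroup_C] subgroup.one_closed[OF subgroup_N] by blast
qed

lemma normal_N: "N \<lhd> G"
  unfolding normal_inv_iff
proof (intro conjI ballI subgroup_N)
  fix g x assume g: "g \<in> carrier G" and x: "x \<in> N"
  have xc: "x \<in> carrier G"
    using x N_subset by blast
  show "g \<otimes> x \<otimes> inv g \<in> N"
  proof (cases "x = \<one>")
    case False
    have "g \<otimes> x \<otimes> inv g \<notin> conj_set G h C" if h: "h \<in> carrier G" for h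
    proof
      assume "g \<otimes> x \<otimes> inv g \<in> conj_set G h C"
      then have "x \<in> conj_set G (inv g) (conj_set G h C)"
        using g h xc conj_set_closed[OF h C_subset]
        by (simp add: mem_conj_set_iff m_assoc)
      then have "x \<in> conj_set G (inv g \<otimes> h) C"
        using g h conj_set_mult[OF _ h C_subset] by simp
      then show False
        using mem_N_iff[OF xc] x False g h by blast
    qed
    moreover have "g \<otimes> x \<otimes> inv g \<noteq> \<one>"
      using False g xc by simp
    ultimately show ?thesis
      using mem_N_iff[of "g \<otimes> x \<otimes> inv g"] g xc by simp
  qed (use g subgroup.one_closed[OF subgroup_N] in simp)
qed

lemma conj_set_subset_N:
  assumes g: "g \<in> carrier G" and M: "M \<subseteq> N"
  shows "conj_set G g M \<subseteq> N"
proof -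
  have "conj_set G g M \<subseteq> conj_set G g N"
    using M N_subset by (auto simp: conj_set_eq_image[OF g])
  then show ?thesis
    using conj_set_normal[OF normal_N g] by simp
qed

lemma fixed_point_free:
  assumes c: "c \<in> C" "c \<noteq> \<one>" and m: "m \<in> N" and comm: "m \<otimes> c = c \<otimes> m"
  shows "m = \<one>"
proof (cases "m \<in> C")
  case True
  then show ?thesis
    using N_inter_C m by blast
next
  case False
  have mc: "m \<in> carrier G" and cc: "c \<in> carrier G"
    using m c N_subset C_subset by blast+
  have "inv m \<otimes> c \<otimes> m = c"
    using mc cc by (simp add: m_assoc comm[symmetric])
  then have "c \<in> C \<inter> conj_set G m C"
    using c mc cc C_subset by (simp add: mem_conj_set_iff)
  then show ?thesis
    using frobenius_condition[OF mc False] c by blast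
qed

lemma fixed_point_free_conj:
  assumes g: "g \<in> carrier G" and c: "c \<in> conj_set G g C" "c \<noteq> \<one>"
    and m: "m \<in> N" and comm: "m \<otimes> c = c \<otimes> m"
  shows "m = \<one>"
proof -
  obtain c0 where c0: "c0 \<in> C" "c = g \<otimes> c0 \<otimes> inv g"
    using c conj_set_eq_image[OF g C_subset] by blast
  have cc: "c0 \<in> carrier G" and mc: "m \<in> carrier G"
    using c0 m C_subset N_subset by blast+
  have "c0 \<noteq> \<one>"
    using c c0 g cc by auto
  have mN: "inv g \<otimes> m \<otimes> g \<in> N"
    using normal.inv_op_closed1[OF normal_N g m] .
  have "(inv g \<otimes> m \<otimes> g) \<otimes> c0 = inv g \<otimes> (m \<otimes> c) \<otimes> g"
    using c0 g cc mc by (simp add: m_assoc)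
  also have "\<dots> = c0 \<otimes> (inv g \<otimes> m \<otimes> g)"
    using comm c0 g cc mc by (simp add: m_assoc)
  finally have "inv g \<otimes> m \<otimes> g = \<one>"
    using fixed_point_free[OF c0(1) \<open>c0 \<noteq> \<one>\<close> mN] by blast
  then show ?thesis
    using g mc conj_eq_one_iff[of "inv g" m] by simp
qed

lemma normalizer_C: "normalizer G C = C"
proof -
  have "conj_set G g C \<noteq> C" if "g \<in> carrier G" "g \<notin> C" for g
    using frobenius_condition[OF that] C_not_trivial by auto
  then show ?thesis
    using conj_set_self[OF subgroup_C] C_subset by (auto simp: normalizer_conj_set[OF C_subset])
qed

lemma orbit_conj_action:
  "H \<subseteq> carrier G \<Longrightarrow> orbit G (conj_action G) H = {conj_set G g H | g. g \<in> carrier G}"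
  unfolding orbit_def conj_action_def by simp

lemma card_conjugates_C: "card (orbit G (conj_action G) C) * q = order G"
proof -
  have "stabilizer G (conj_action G) C = normalizer G C"
    unfolding normalizer_def stabilizer_def conj_action_def conj_set_def ..
  then show ?thesis
    using group_action.orbit_stabilizer_theorem[OF group_action_conj_action, of C]
      C_subset normalizer_C card_C by simp
qed

lemma order_le: "order G \<le> p ^ 2 * q"
proof -
  let ?Cl = "orbit G (conj_action G) C"
  have Cl: "?Cl = {conj_set G g C | g. g \<in> carrier G}"
    using orbit_conj_action[OF C_subset] .
  have "?Cl = (\<lambda>g. conj_set G g C) ` carrier G"
    using Cl by blast
  then have "finite ?Cl"
    using finite_carrier by simp
  have Y: "card Y = q" "\<one> \<in> Y" "finite Y" if Y_mem: "Y \<in> ?Cl" for Y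
  proof -
    obtain g where g: "g \<in> carrier G" "Y = conj_set G g C"
      using Y_mem by (auto simp: Cl)
    show "card Y = q"
      using g card_conj_set[OF g(1) C_subset] card_C by simp
    show "\<one> \<in> Y"
      using g subgroup.one_closed[OF subgroup_conj_set[OF g(1) subgroup_C]] by simp
    show "finite Y"
      using g conj_set_closed[OF g(1) C_subset] finite_carrier finite_subset by metis
  qed
  have "carrier G \<subseteq> N \<union> (\<Union>Y \<in> ?Cl. Y - {\<one>})"
    using mem_N_iff unfolding Cl by blast
  then have "order G \<le> card (N \<union> (\<Union>Y \<in> ?Cl. Y - {\<one>}))"
    unfolding order_def using finite_N \<open>finite ?Cl\<close> Y(3) by (intro card_mono) auto
  also have "\<dots> \<le> card N + (\<Sum>Y \<in> ?Cl. card (Y - {\<one>}))"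
    using card_Un_le card_UN_le[OF \<open>finite ?Cl\<close>] add_left_mono order_trans by blast
  also have "\<dots> = p ^ 2 + card ?Cl * (q - 1)"
    using card_N Y by simp
  finally have "card ?Cl * q \<le> p ^ 2 + card ?Cl * (q - 1)"
    using card_conjugates_C by simp
  moreover have "card ?Cl * q = card ?Cl * (q - 1) + card ?Cl"
    using q_ge_2 by (cases q) auto
  ultimately have "card ?Cl \<le> p ^ 2"
    by linarith
  then show ?thesis
    using card_conjugates_C[symmetric] by simp
qed

lemma carrier_eq_N_mult_C: "(\<lambda>(n, c). n \<otimes> c) ` (N \<times> C) = carrier G"
proof (rule card_subset_eq[OF finite_carrier])
  show sub: "(\<lambda>(n, c). n \<otimes> c) ` (N \<times> C) \<subseteq> carrier G"
    using N_subset C_subset by auto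
  have "card ((\<lambda>(n, c). n \<otimes> c) ` (N \<times> C)) = p ^ 2 * q"
    using card_mult_disjoint_subgroups[OF subgroup_N subgroup_C] N_inter_C card_N card_C by simp
  then show "card ((\<lambda>(n, c). n \<otimes> c) ` (N \<times> C)) = card (carrier G)"
    using order_le card_mono[OF finite_carrier sub] unfolding order_def by simp
qed

lemma decomposition:
  assumes "y \<in> carrier G"
  obtains n c where "n \<in> N" "c \<in> C" "y = n \<otimes> c"
proof -
  have "y \<in> (\<lambda>(n, c). n \<otimes> c) ` (N \<times> C)"
    using assms carrier_eq_N_mult_C by simp
  then show ?thesis
    using that by auto
qed

lemma decomposition_conj:
  assumes g: "g \<in> carrier G" and y: "y \<in> carrier G"
  obtains n c where "n \<in> N" "c \<in> conj_set G g C" "y = n \<otimes> c"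
proof -
  obtain n c where nc: "n \<in> N" "c \<in> C" "inv g \<otimes> y \<otimes> g = n \<otimes> c"
    using decomposition[of "inv g \<otimes> y \<otimes> g"] g y by blast
  have ncc: "n \<in> carrier G" "c \<in> carrier G"
    using nc N_subset C_subset by blast+
  have "y = g \<otimes> (inv g \<otimes> y \<otimes> g) \<otimes> inv g"
    using g y by (simp add: m_assoc)
  also have "\<dots> = (g \<otimes> n \<otimes> inv g) \<otimes> (g \<otimes> c \<otimes> inv g)"
    using nc(3) g ncc conj_mult by simp
  finally show ?thesis
    using that normal.inv_op_closed2[OF normal_N g nc(1)] nc(2)
      conj_set_eq_image[OF g C_subset] by blast
qed

lemma self_normalizing_if_contains_complement:
  assumes H: "subgroup H G" and g: "g \<in> carrier G" and sub: "conj_set G g C \<subseteq> H"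
  shows "normalizer G H = H"
proof
  have Hc: "H \<subseteq> carrier G"
    using H subgroup.subset by blast
  show "H \<subseteq> normalizer G H"
    using conj_set_self[OF H] Hc by (auto simp: normalizer_conj_set)
  show "normalizer G H \<subseteq> H"
  proof
    fix y assume y: "y \<in> normalizer G H"
    then have yc: "y \<in> carrier G"
      using Hc by (simp add: normalizer_conj_set)
    obtain n c where nc: "n \<in> N" "c \<in> conj_set G g C" "y = n \<otimes> c"
      using decomposition_conj[OF g yc] by blast
    have cH: "c \<in> H"
      using nc sub by blast
    have ncc: "n \<in> carrier G" "c \<in> carrier G"
      using nc(1) cH N_subset Hc by blast+
    interpret normalizer: subgroup "normalizer G H" G
      by (rule normalizer_imp_subgroup[OF Hc])
    have "n = y \<otimes> inv c"
      using nc(3) ncc by (simp add: m_assoc)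
    moreover have "c \<in> normalizer G H"
      using cH \<open>H \<subseteq> normalizer G H\<close> by blast
    ultimately have n_norm: "n \<in> normalizer G H"
      using y by simp
    obtain c' where c'_mem: "c' \<in> conj_set G g C" and c'_ne: "c' \<noteq> \<one>"
      using conj_C_nontrivial_elem[OF g] by blast
    have "n \<in> H"
      using normalizer_mem_of_fixed_point_free[where c = c', OF H normal_N finite_N _ _ nc(1) n_norm]
        fixed_point_free_conj[OF g c'_mem c'_ne] c'_mem sub by blast
    then show "y \<in> H"
      using subgroup.m_closed[OF H _ cH] nc(3) by simp
  qed
qed

lemma subset_N_if_not_self_normalizing:
  assumes H: "subgroup H G" and not_self: "normalizer G H \<noteq> H"
  shows "H \<subseteq> N"
proof
  fix x assume x: "x \<in> H"
  show "x \<in> N"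
  proof (rule ccontr)
    assume "x \<notin> N"
    moreover have xc: "x \<in> carrier G"
      using x H subgroup.subset by blast
    ultimately obtain g where g: "g \<in> carrier G" "x \<in> conj_set G g C" and "x \<noteq> \<one>"
      using mem_N_iff by blast
    have "Factorial_Ring.prime (card (conj_set G g C))"
      using card_conj_set[OF g(1) C_subset] card_C prime_q by simp
    then have "conj_set G g C \<subseteq> H"
      using subgroup_of_prime_card_subset[OF H subgroup_conj_set[OF g(1) subgroup_C]]
        x g(2) \<open>x \<noteq> \<one>\<close> by blast
    then show False
      using self_normalizing_if_contains_complement[OF H g(1)] not_self by blast
  qed
qed

lemma N_ne_one: "N \<noteq> {\<one>}"
  using card_N p_ge_2 by (auto simp: power2_eq_square)

lemma N_not_in_lines: "N \<notin> lines"
proof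
  assume "N \<in> lines"
  then have "p ^ 2 = p"
    using lines_D(3) card_N by metis
  then show False
    using p_ge_2 by (simp add: power2_eq_square)
qed

lemma D_subgroups_eq: "D_subgroups G = insert N lines"
proof (intro equalityI subsetI)
  fix H assume "H \<in> D_subgroups G"
  then have H: "subgroup H G" "H \<noteq> {\<one>}" "normalizer G H \<noteq> H"
    unfolding D_subgroups_def by auto
  then show "H \<in> insert N lines"
    using subgroup_of_N_cases[OF H(1) subset_N_if_not_self_normalizing[OF H(1,3)]] by blast
next
  fix H assume "H \<in> insert N lines"
  then consider "H = N" | "H \<in> lines"
    by blast
  then show "H \<in> D_subgroups G"
  proof cases
    case 1
    obtain c where c: "c \<in> C" "c \<noteq> \<one>"
      using C_nontrivial_elem by blast
    have "c \<in> normalizer G N"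
      using c C_subset conj_set_normal[OF normal_N] N_subset by (auto simp: normalizer_conj_set)
    moreover have "c \<notin> N"
      using c N_inter_C by blast
    ultimately show ?thesis
      using 1 subgroup_N N_ne_one unfolding D_subgroups_def by blast
  next
    case 2
    have "H \<noteq> N"
      using 2 N_not_in_lines by blast
    then obtain n where n: "n \<in> N" "n \<notin> H"
      using lines_D(2)[OF 2] by blast
    have HN: "H \<subseteq> N"
      using lines_D(2)[OF 2] .
    have "conj_set G n H = H"
      using HN n(1) N_subset by (intro conj_set_centralized) (auto intro: N_comm)
    then have "n \<in> normalizer G H"
      using HN n(1) N_subset by (auto simp: normalizer_conj_set)
    moreover have "H \<noteq> {\<one>}"
      using 2 lines_D(3) p_ge_2 by fastforce
    ultimately show ?thesis
      using 2 lines_D(1) n(2) unfolding D_subgroups_def by blast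
  qed
qed

abbreviation C_group where "C_group \<equiv> G\<lparr>carrier := C\<rparr>"

lemma order_C_group: "order C_group = q"
  using card_C unfolding order_def by simp

lemma C_group_action: "group_action C_group {H. H \<subseteq> carrier G} (conj_action G)"
  using group_action.induced_action[OF group_action_conj_action subgroup_C] .

lemma conj_action_line: "L \<in> lines \<Longrightarrow> conj_action G g L = conj_set G g L"
  using lines_D(2) N_subset unfolding conj_action_def by auto

lemma orbit_line: "L \<in> lines \<Longrightarrow> orbit C_group (conj_action G) L = {conj_set G c L | c. c \<in> C}"
  using conj_action_line unfolding orbit_def by simp

lemma conj_class_line:
  assumes L: "L \<in> lines"
  shows "conj_class G L = orbit C_group (conj_action G) L"
proof -
  have LN: "L \<subseteq> N" and Lc: "L \<subseteq> carrier G"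
    using lines_D(2)[OF L] N_subset by blast+
  have "conj_set G g L \<in> {conj_set G c L | c. c \<in> C}" if g: "g \<in> carrier G" for g
  proof -
    obtain n c where nc: "n \<in> N" "c \<in> C" "g = n \<otimes> c"
      using decomposition[OF g] by blast
    have ncc: "n \<in> carrier G" "c \<in> carrier G"
      using nc N_subset C_subset by blast+
    have "conj_set G c L \<subseteq> N"
      using conj_set_subset_N[OF ncc(2) LN] .
    then have "conj_set G n (conj_set G c L) = conj_set G c L"
      using nc(1) ncc N_subset by (intro conj_set_centralized) (auto intro: N_comm)
    then show ?thesis
      using nc conj_set_mult[OF ncc Lc] by auto
  qed
  then show ?thesis
    using C_subset unfolding conj_class_def orbit_line[OF L] by blast
qed

lemma conj_class_N: "conj_class G N = {N}"
  using conj_set_normal[OF normal_N] unfolding conj_class_def by blast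

lemma D_count_eq: "D_count G = card (orbit C_group (conj_action G) ` lines) + 1"
proof -
  have "conj_class G ` D_subgroups G = insert {N} (orbit C_group (conj_action G) ` lines)"
    using D_subgroups_eq conj_class_N conj_class_line by simp
  moreover have "{N} \<notin> orbit C_group (conj_action G) ` lines"
  proof
    assume "{N} \<in> orbit C_group (conj_action G) ` lines"
    then obtain L where L: "L \<in> lines" "{N} = orbit C_group (conj_action G) L"
      by blast
    have "L \<in> orbit C_group (conj_action G) L"
      using group_action.orbit_refl[OF C_group_action] lines_D(2)[OF L(1)] N_subset by blast
    then have "L = N"
      using L(2) by blast
    then show False
      using L(1) N_not_in_lines by simp
  qed
  ultimately show ?thesis
    unfolding D_count_def using finite_lines by simp
qed

definition invariant_lines :: "'a set set" where
  "invariant_lines = fixed_points C_group (conj_action G) lines"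

lemma mem_invariant_lines_iff:
  "L \<in> invariant_lines \<longleftrightarrow> L \<in> lines \<and> (\<forall>c \<in> C. conj_set G c L = L)"
  using conj_action_line unfolding invariant_lines_def fixed_points_def by auto

lemma lines_conj_closed:
  assumes c: "c \<in> C" and L: "L \<in> lines"
  shows "conj_action G c L \<in> lines"
proof -
  have cc: "c \<in> carrier G" and Lc: "L \<subseteq> carrier G"
    using c L C_subset lines_D(2) N_subset by blast+
  have "conj_set G c L \<subseteq> N"
    using conj_set_subset_N[OF cc lines_D(2)[OF L]] .
  then show ?thesis
    using subgroup_conj_set[OF cc lines_D(1)[OF L]] card_conj_set[OF cc Lc] lines_D(3)[OF L]
      conj_action_line[OF L] unfolding lines_def by simp
qed

lemma line_counts:
  shows "card lines = card invariant_lines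
           + q * card (orbit C_group (conj_action G) ` (lines - invariant_lines))"
    and "card (orbit C_group (conj_action G) ` lines) = card invariant_lines
           + card (orbit C_group (conj_action G) ` (lines - invariant_lines))"
  using group_action.card_invariant_set_of_prime_order[OF C_group_action, of lines]
    group_action.card_orbits_split_fixed_points[OF C_group_action, of lines]
    order_C_group prime_q finite_lines lines_D(2) N_subset lines_conj_closed
  unfolding invariant_lines_def by auto

lemma invariant_line_if_invariant_under_nontrivial:
  assumes L: "L \<in> lines" and c: "c \<in> C" "c \<noteq> \<one>" and inv: "conj_set G c L = L"
  shows "L \<in> invariant_lines"
proof -
  have "L \<in> fixed_points C_group (conj_action G) {H. H \<subseteq> carrier G}"
    using group_action.fixed_point_if_fixed_by_nontrivial[OF C_group_action, of L c]
      order_C_group prime_q L lines_D(2) N_subset c inv conj_action_line by auto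
  then show ?thesis
    using L unfolding invariant_lines_def fixed_points_def by blast
qed

lemma conj_mem_invariant_line:
  assumes L: "L \<in> invariant_lines" and c: "c \<in> C" and h: "h \<in> L" "h \<noteq> \<one>"
  shows "c \<otimes> h \<otimes> inv c \<in> L" "c \<otimes> h \<otimes> inv c \<noteq> \<one>"
proof -
  have Lc: "L \<subseteq> carrier G"
    using L lines_D(2) N_subset unfolding mem_invariant_lines_iff by blast
  have cc: "c \<in> carrier G"
    using c C_subset by blast
  show "c \<otimes> h \<otimes> inv c \<in> L"
    using L c h(1) conj_set_eq_image[OF cc Lc] unfolding mem_invariant_lines_iff by blast
  show "c \<otimes> h \<otimes> inv c \<noteq> \<one>"
    using h Lc cc by auto
qed

text \<open>\<open>C\<close> acts freely by conjugation on the \<open>p - 1\<close> nontrivial elements of an invariant line.\<close>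
lemma q_dvd_if_invariant_line:
  assumes L: "L \<in> invariant_lines"
  shows "q dvd p - 1"
proof -
  let ?\<phi> = "\<lambda>g. \<lambda>h \<in> carrier G. g \<otimes> h \<otimes> inv g"
  interpret C_act: group_action C_group "carrier G" ?\<phi>
    using group_action.induced_action[OF action_by_conjugation subgroup_C] .
  have L_line: "L \<in> lines"
    using L mem_invariant_lines_iff by blast
  have Lc: "L \<subseteq> carrier G"
    using lines_D(2)[OF L_line] N_subset by blast
  let ?S = "L - {\<one>}"
  have inv: "?\<phi> c h \<in> ?S" if "c \<in> C" "h \<in> ?S" for c h
    using conj_mem_invariant_line[OF L that(1)] that(2) Lc by auto
  have "fixed_points C_group ?\<phi> ?S = {}"
  proof -
    obtain c where c: "c \<in> C" "c \<noteq> \<one>"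
      using C_nontrivial_elem by blast
    have "h = \<one>" if h: "h \<in> ?S" "c \<otimes> h \<otimes> inv c = h" for h
    proof -
      have cc: "c \<in> carrier G" and hc: "h \<in> carrier G"
        using c h C_subset Lc by blast+
      have "h \<otimes> c = c \<otimes> h"
        using h(2) cc hc by (metis inv_closed m_closed m_assoc l_inv r_one)
      then show ?thesis
        using fixed_point_free[OF c] h lines_D(2)[OF L_line] by blast
    qed
    then show ?thesis
      using c Lc unfolding fixed_points_def by force
  qed
  then have "card ?S = q * card (orbit C_group ?\<phi> ` ?S)"
    using C_act.card_invariant_set_of_prime_order[of ?S] order_C_group prime_q
      lines_D(4)[OF L_line] Lc inv by auto
  moreover have "card ?S = p - 1"
    using lines_D(3-5)[OF L_line] by simp
  ultimately show ?thesis
    by simp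
qed

lemma all_lines_invariant_if_three_invariant:
  assumes "3 \<le> card invariant_lines"
  shows "invariant_lines = lines"
proof -
  obtain L1 L2 L3 where L: "L1 \<in> invariant_lines" "L2 \<in> invariant_lines" "L3 \<in> invariant_lines"
    and distinct: "L1 \<noteq> L2" "L1 \<noteq> L3" "L2 \<noteq> L3"
    using card_ge_3_obtain[OF assms] by blast
  obtain c where c: "c \<in> C" "c \<noteq> \<one>"
    using C_nontrivial_elem by blast
  have cc: "c \<in> carrier G"
    using c C_subset by blast
  have lines: "L1 \<in> lines" "L2 \<in> lines" "L3 \<in> lines"
    and inv: "conj_set G c L1 = L1" "conj_set G c L2 = L2" "conj_set G c L3 = L3"
    using L c(1) unfolding mem_invariant_lines_iff by blast+
  obtain e :: nat where "\<And>m. m \<in> N \<Longrightarrow> c \<otimes> m \<otimes> inv c = m [^] e"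
    using conj_eq_power_if_three_invariant_lines[OF cc lines distinct inv] by blast
  then have "L \<in> invariant_lines" if "L \<in> lines" for L
    using invariant_line_if_invariant_under_nontrivial[OF that c]
      conj_set_line_if_conj_eq_power[OF cc _ that] by blast
  then show ?thesis
    using mem_invariant_lines_iff by blast
qed

text \<open>For \<open>c\<close> of order 2, the element \<open>m (c m c)\<close> commutes with \<open>c\<close>, hence is trivial.\<close>
lemma conj_eq_inv_if_q_eq_2:
  assumes q: "q = 2" and c: "c \<in> C" "c \<noteq> \<one>" and m: "m \<in> N"
  shows "c \<otimes> m \<otimes> inv c = inv m"
proof -
  have cc: "c \<in> carrier G" and mc: "m \<in> carrier G"
    using c m C_subset N_subset by blast+
  have "C = {\<one>, c}"
    using card_subset_eq[of C "{\<one>, c}"] card_C q c subgroup.one_closed[OF subgroup_C]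
      card.infinite by fastforce
  moreover have "c \<otimes> c \<in> C" "c \<otimes> c \<noteq> c"
    using subgroup.m_closed[OF subgroup_C c(1) c(1)] c cc by (auto simp: r_cancel_one')
  ultimately have "c \<otimes> c = \<one>"
    by blast
  then have inv_c: "inv c = c"
    using cc inv_equality by blast
  define w where "w = c \<otimes> m \<otimes> inv c"
  have w: "w \<in> N" "w \<in> carrier G"
    using normal.inv_op_closed2[OF normal_N cc m] N_subset unfolding w_def by blast+
  have "c \<otimes> (m \<otimes> w) = w \<otimes> m \<otimes> c"
    using cc mc inv_c unfolding w_def by (simp add: m_assoc)
  also have "\<dots> = (m \<otimes> w) \<otimes> c"
    using N_comm[OF w(1) m] by simp
  finally have "m \<otimes> w = \<one>"
    using fixed_point_free[OF c subgroup.m_closed[OF subgroup_N m w(1)]] by simp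
  then show ?thesis
    using mc w(2) unfolding w_def by (metis inv_comm inv_equality)
qed

lemma all_lines_invariant_if_q_eq_2:
  assumes q: "q = 2"
  shows "invariant_lines = lines"
proof -
  obtain c where c: "c \<in> C" "c \<noteq> \<one>"
    using C_nontrivial_elem by blast
  have cc: "c \<in> carrier G"
    using c C_subset by blast
  have "\<And>m. m \<in> N \<Longrightarrow> c \<otimes> m \<otimes> inv c = m [^] (p - 1)"
    using conj_eq_inv_if_q_eq_2[OF q c] inv_eq_pow_p_minus_1 by simp
  then have "L \<in> invariant_lines" if "L \<in> lines" for L
    using invariant_line_if_invariant_under_nontrivial[OF that c]
      conj_set_line_if_conj_eq_power[OF cc _ that] by blast
  then show ?thesis
    using mem_invariant_lines_iff by blast
qed

end

section \<open>Counting the subgroups that are not self-normalizing\<close>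

lemma few_invariant_lines_arith:
  fixes q f b k :: nat
  assumes q2: "2 \<le> q" and fk: "f + q * b = q * k + 2" and f: "f < 3"
    and two: "q = 2 \<Longrightarrow> b = 0"
  shows "f = 2 \<and> b = k"
proof -
  consider "f = 0" | "f = 1" | "f = 2"
    using f by linarith
  then show ?thesis
  proof cases
    case 1
    then have "q * b = q * k + 2"
      using fk by simp
    then have "q dvd q * k + 2"
      by (metis dvd_triv_left)
    then have "q dvd 2"
      using dvd_add_right_iff[OF dvd_triv_left[of q k]] by blast
    then have "b = 0"
      using two q2 dvd_imp_le[of q 2] by simp
    then show ?thesis
      using 1 fk by simp
  next
    case 2
    then have "q * b = q * k + 1"
      using fk by simp
    then have "q dvd q * k + 1"
      by (metis dvd_triv_left)
    then have "q dvd 1"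
      using dvd_add_right_iff[OF dvd_triv_left[of q k]] by blast
    then show ?thesis
      using q2 by simp
  next
    case 3
    then show ?thesis
      using fk q2 by simp
  qed
qed

text \<open>Here \<open>f\<close> counts the \<open>C\<close>-invariant lines and \<open>b\<close> the \<open>C\<close>-orbits of length \<open>q\<close> on the others.\<close>
lemma D_count_arithmetic:
  fixes p q f b :: nat
  assumes p: "Factorial_Ring.prime p" and q: "Factorial_Ring.prime q"
    and lines: "p + 1 = f + q * b"
    and invariant: "0 < f \<Longrightarrow> q dvd p - 1"
    and three: "3 \<le> f \<Longrightarrow> b = 0"
    and two: "q = 2 \<Longrightarrow> b = 0"
  shows "(\<not> q dvd (p - 1) \<longrightarrow> f + b + 1 = (p + 1) div q + 1) \<and>
         (q dvd (p - 1) \<longrightarrow>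
            (f + b + 1 = p + 2 \<or> f + b + 1 = (p - 1) div q + 3) \<and>
            (q = 2 \<longrightarrow> f + b + 1 = p + 2))"
proof -
  have p2: "2 \<le> p" and q2: "2 \<le> q"
    using p q prime_ge_2_nat by blast+
  have not_dvd: "f + b + 1 = (p + 1) div q + 1" if "\<not> q dvd (p - 1)"
  proof -
    have "f = 0"
      using that invariant by blast
    then show ?thesis
      using lines q2 by simp
  qed
  have dvd: "f + b + 1 = p + 2 \<or> f + b + 1 = (p - 1) div q + 3" if "q dvd (p - 1)"
  proof (cases "3 \<le> f")
    case True
    then show ?thesis
      using three lines by simp
  next
    case False
    obtain k where k: "p - 1 = q * k"
      using \<open>q dvd (p - 1)\<close> by blast
    then have "f + q * b = q * k + 2"
      using lines p2 by simp
    moreover have "f < 3"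
      using False by simp
    ultimately have "f = 2 \<and> b = k"
      using few_invariant_lines_arith[OF q2 _ _ two] by blast
    then show ?thesis
      using k q2 by simp
  qed
  show ?thesis
    using not_dvd dvd two lines by auto
qed

theorem mainTheorem9:
  fixes G (structure) and C :: "'a set" and p q :: nat
  assumes "group G" and "finite (carrier G)"
    and "frobenius_complement G C"
    and "Factorial_Ring.prime p" and "Factorial_Ring.prime q"
    and "elementary_abelian G (frobenius_kernel G C) p"
    and "card (frobenius_kernel G C) = p ^ 2"
    and "card C = q"
  shows "(\<not> q dvd (p - 1) \<longrightarrow> D_count G = (p + 1) div q + 1) \<and>
         (q dvd (p - 1) \<longrightarrow>
            (D_count G = p + 2 \<or> D_count G = (p - 1) div q + 3) \<and>
            (q = 2 \<longrightarrow> D_count G = p + 2))"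
proof -
  interpret frobenius_p2q G "frobenius_kernel G C" p C q
    using assms
    by (intro frobenius_p2q.intro elementary_abelian_p2.intro elementary_abelian_p2_axioms.intro
        frobenius_p2q_axioms.intro) simp_all
  let ?f = "card invariant_lines"
  let ?b = "card (orbit C_group (conj_action G) ` (lines - invariant_lines))"
  have D_count: "D_count G = ?f + ?b + 1"
    using D_count_eq line_counts(2) by simp
  have "p + 1 = ?f + q * ?b"
    using line_counts(1) card_lines by simp
  moreover have "q dvd p - 1" if "0 < ?f"
  proof -
    obtain L where "L \<in> invariant_lines"
      using \<open>0 < ?f\<close> by (metis all_not_in_conv card.empty less_irrefl)
    then show ?thesis
      by (rule q_dvd_if_invariant_line)
  qed
  moreover have "?b = 0" if "3 \<le> ?f"
    using all_lines_invariant_if_three_invariant[OF that] by simp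
  moreover have "?b = 0" if "q = 2"
    using all_lines_invariant_if_q_eq_2[OF that] by simp
  ultimately show ?thesis
    unfolding D_count by (rule D_count_arithmetic[OF prime_p prime_q])
qed

end
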